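(* There is no linear isometry $\phi:\ell^\infty\to\ell^\infty$ whose image is contained in $L(\mathbb{N}\cup\{\omega\})\cup\{0\}$. That is, the set of bounded real sequences having at most countably many accumulation points, together with $0$, does not contain an isometric copy of $\ell^\infty$.
   Context: $\ell^\infty$ is the Banach space of bounded real sequences with the sup norm. For $x\in\ell^\infty$, $L_x$ denotes the set of accumulation points (subsequential limits) of $x$. $\omega$ denotes the cardinality of $\mathbb{N}$. For a set $A$ of cardinalities, $L(A)=\{x\in\ell^\infty: |L_x|\in A\}$; so $L(\mathbb{N}\cup\{\omega\})$ is the set of $x\in\ell^\infty$ with $L_x$ finite or countably infinite. *)

theory Defs
  imports "HOL-Analysis.Analysis"
begin

definition linf :: "(nat \<Rightarrow> real) set" where
  "linf = {x. bounded (range x)}"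

definition linf_norm :: "(nat \<Rightarrow> real) \<Rightarrow> real" where
  "linf_norm x = (SUP n. \<bar>x n\<bar>)"

definition acc_points :: "(nat \<Rightarrow> real) \<Rightarrow> real set" where
  "acc_points x = {l. \<exists>r. strict_mono r \<and> (x \<circ> r) \<longlonglongrightarrow> l}"

text \<open>L(N \<union> {omega}): bounded sequences with finitely or countably infinitely many accumulation points.\<close>
definition L_countable :: "(nat \<Rightarrow> real) set" where
  "L_countable = {x \<in> linf. countable (acc_points x)}"

definition linf_linear_isometry :: "((nat \<Rightarrow> real) \<Rightarrow> (nat \<Rightarrow> real)) \<Rightarrow> bool" where
  "linf_linear_isometry \<phi> \<longleftrightarrow>
     (\<forall>x\<in>linf. \<phi> x \<in> linf) \<and>
     (\<forall>x\<in>linf. \<forall>y\<in>linf. \<forall>a b::real.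
        \<phi> (\<lambda>n. a * x n + b * y n) = (\<lambda>n. a * \<phi> x n + b * \<phi> y n)) \<and>
     (\<forall>x\<in>linf. \<forall>y\<in>linf. linf_norm (\<lambda>n. \<phi> x n - \<phi> y n) = linf_norm (\<lambda>n. x n - y n))"

end

theory Submission
  imports Defs
begin

text \<open>Code each \<open>b \<in> {0,1}\<^sup>\<nat>\<close> by \<open>x\<^sub>b = \<Sum>\<^sub>k (1/3)^(k+1) \<epsilon>\<^sub>k(b) u\<^sub>k\<close>, where \<open>\<epsilon>\<^sub>k(b) = \<plusminus>1\<close> and the
  coordinates of the sequences \<open>u\<^sub>k\<close> run through all finite sign patterns, so that \<open>\<parallel>x\<^sub>b\<parallel> = 1/2\<close>.
  For a linear isometry \<open>\<phi>\<close>, every coordinate of \<open>\<phi> x\<^sub>b\<close> is a ternary expansion with digits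
  \<open>\<epsilon>\<^sub>k(b) \<phi>(u\<^sub>k)\<close> of modulus at most \<open>1\<close>. Where \<open>|\<phi> x\<^sub>b|\<close> attains its norm \<open>1/2\<close> all these digits
  equal a common sign, and where it only approaches it they tend to one. Since ternary
  expansions with digits \<open>\<plusminus>1\<close> are unique, \<open>b\<close> is determined either by a coordinate and a sign, or
  by a sign and an accumulation point of the single sequence \<open>\<phi> x\<^sub>1\<close>; so \<open>\<phi> x\<^sub>1 \<noteq> 0\<close> has
  uncountably many accumulation points.\<close>

lemma linf_iff_abs_bounded: "x \<in> linf \<longleftrightarrow> (\<exists>B. \<forall>n. \<bar>x n\<bar> \<le> B)"
  unfolding linf_def bounded_iff by auto

lemma abs_le_linf_norm: "x \<in> linf \<Longrightarrow> \<bar>x n\<bar> \<le> linf_norm x"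
  unfolding linf_norm_def linf_iff_abs_bounded
  by (rule cSUP_upper) (auto simp: bdd_above_def)

lemma linf_norm_le: "(\<And>n. \<bar>x n\<bar> \<le> B) \<Longrightarrow> linf_norm x \<le> B"
  unfolding linf_norm_def by (rule cSUP_least) auto

lemma zero_linf: "(\<lambda>n. 0) \<in> linf"
  by (auto simp: linf_iff_abs_bounded intro!: exI[of _ 0])

lemma linf_norm_zero: "linf_norm (\<lambda>n. 0) = 0"
  by (simp add: linf_norm_def)

lemma linf_lincomb:
  assumes "x \<in> linf" "y \<in> linf"
  shows "(\<lambda>n. a * x n + b * y n) \<in> linf"
proof -
  obtain A B where A: "\<And>n. \<bar>x n\<bar> \<le> A" and B: "\<And>n. \<bar>y n\<bar> \<le> B"
    using assms unfolding linf_iff_abs_bounded by blast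
  have "\<bar>a * x n + b * y n\<bar> \<le> \<bar>a\<bar> * A + \<bar>b\<bar> * B" for n
  proof -
    have "\<bar>a * x n + b * y n\<bar> \<le> \<bar>a\<bar> * \<bar>x n\<bar> + \<bar>b\<bar> * \<bar>y n\<bar>"
      by (simp add: abs_mult[symmetric] abs_triangle_ineq)
    also have "\<dots> \<le> \<bar>a\<bar> * A + \<bar>b\<bar> * B"
      using A B by (intro add_mono mult_left_mono) auto
    finally show ?thesis .
  qed
  then show ?thesis unfolding linf_iff_abs_bounded by blast
qed

lemma linf_sum:
  fixes u :: "nat \<Rightarrow> nat \<Rightarrow> real"
  assumes "\<And>k. u k \<in> linf"
  shows "(\<lambda>m. \<Sum>k<K. c k * u k m) \<in> linf"
proof (induction K)
  case 0
  then show ?case using zero_linf by simp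
next
  case (Suc K)
  then show ?case using linf_lincomb[OF _ assms, of _ 1 "c K"] by simp
qed

lemma linf_subseq_acc_point:
  fixes r :: "nat \<Rightarrow> nat"
  assumes "x \<in> linf" and "strict_mono r"
  obtains r' l where "strict_mono r'" "(x \<circ> (r \<circ> r')) \<longlonglongrightarrow> l" "l \<in> acc_points x"
proof -
  have "bounded (range x)"
    using assms(1) by (simp add: linf_def)
  then have "bounded (range (x \<circ> r))"
    by (rule bounded_subset) auto
  from bounded_imp_convergent_subsequence[OF this]
  obtain l r' where r': "strict_mono r'" "((x \<circ> r) \<circ> r') \<longlonglongrightarrow> l"
    by blast
  then have "l \<in> acc_points x"
    unfolding acc_points_def using strict_mono_o[OF assms(2) r'(1)] by (auto simp: comp_assoc)
  with r' show thesis by (intro that) (auto simp: comp_assoc)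
qed

lemma linf_norm_attained_or_acc_point:
  assumes x: "x \<in> linf"
  shows "(\<exists>l\<in>acc_points x. \<bar>l\<bar> = linf_norm x) \<or> (\<exists>n. \<bar>x n\<bar> = linf_norm x)"
proof (rule disjCI)
  assume "\<not> (\<exists>n. \<bar>x n\<bar> = linf_norm x)"
  then have "linf_norm x \<notin> range (\<lambda>n. \<bar>x n\<bar>)" by auto
  moreover have "linf_norm x \<in> closure (range (\<lambda>n. \<bar>x n\<bar>))"
    unfolding linf_norm_def using x
    by (intro closure_contains_Sup) (auto simp: linf_iff_abs_bounded bdd_above_def)
  ultimately have "linf_norm x islimpt range (\<lambda>n. \<bar>x n\<bar>)"
    by (simp add: closure_def)
  then obtain r where r: "strict_mono r" "((\<lambda>n. \<bar>x n\<bar>) \<circ> r) \<longlonglongrightarrow> linf_norm x"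
    using islimpt_range_imp_convergent_subsequence by blast
  obtain r' l where r': "strict_mono r'" "(x \<circ> (r \<circ> r')) \<longlonglongrightarrow> l" and l: "l \<in> acc_points x"
    using linf_subseq_acc_point[OF x r(1)] .
  have "((\<lambda>n. \<bar>x n\<bar>) \<circ> r \<circ> r') \<longlonglongrightarrow> linf_norm x"
    by (rule LIMSEQ_subseq_LIMSEQ[OF r(2) r'(1)])
  moreover have "((\<lambda>n. \<bar>x n\<bar>) \<circ> r \<circ> r') \<longlonglongrightarrow> \<bar>l\<bar>"
    using tendsto_rabs[OF r'(2)] by (simp add: o_def)
  ultimately have "\<bar>l\<bar> = linf_norm x"
    using LIMSEQ_unique by blast
  with l show "\<exists>l\<in>acc_points x. \<bar>l\<bar> = linf_norm x" by blast
qed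

lemma uncountable_bit_sequences: "uncountable (UNIV :: (nat \<Rightarrow> bool) set)"
proof
  assume countable: "countable (UNIV :: (nat \<Rightarrow> bool) set)"
  define f where "f = from_nat_into (UNIV :: (nat \<Rightarrow> bool) set)"
  obtain n where "f n = (\<lambda>k. \<not> f k k)"
    using from_nat_into_surj[OF countable] unfolding f_def by blast
  then have "f n n = (\<not> f n n)"
    by (rule fun_cong)
  then show False by simp
qed

definition ternary_weight :: "nat \<Rightarrow> real" where
  "ternary_weight k = (1/3) ^ Suc k"

text \<open>For digits with \<open>\<bar>c k\<bar> \<le> 1\<close> this says \<open>t = (\<Sum>k. (1/3)^(k+1) * c k)\<close>; the bound
  \<open>(1/3)^K / 2\<close> is the largest possible tail after \<open>K\<close> digits.\<close>
definition ternary_expansion :: "(nat \<Rightarrow> real) \<Rightarrow> real \<Rightarrow> bool" where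
  "ternary_expansion c t \<longleftrightarrow> (\<forall>K. \<bar>t - (\<Sum>k<K. ternary_weight k * c k)\<bar> \<le> (1/3) ^ K / 2)"

lemma ternary_weight_pos: "0 < ternary_weight k"
  by (simp add: ternary_weight_def)

lemma sum_ternary_weight: "(\<Sum>k<K. ternary_weight k) = (1 - (1/3) ^ K) / 2"
proof (induction K)
  case (Suc K)
  have "(1 - q) / 2 + q / 3 = (1 - q / 3) / 2" for q :: real
    by (simp add: field_simps)
  from this[of "(1/3) ^ K"] Suc show ?case
    by (simp add: ternary_weight_def power_Suc2 del: power_Suc)
qed simp

lemma sum_ternary_weight_ivl:
  "K \<le> N \<Longrightarrow> (\<Sum>k\<in>{K..<N}. ternary_weight k) = ((1/3) ^ K - (1/3) ^ N) / 2"
  using sum_diff_nat_ivl[of 0 K N ternary_weight]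
  by (simp add: atLeast0LessThan sum_ternary_weight field_simps)

lemma ternary_expansion_finite:
  assumes digits: "\<And>k. \<bar>c k\<bar> \<le> 1" and vanish: "\<And>k. N \<le> k \<Longrightarrow> c k = 0"
  shows "ternary_expansion c (\<Sum>k<N. ternary_weight k * c k)"
  unfolding ternary_expansion_def
proof
  fix K
  define M where "M = max K N"
  have "(\<Sum>k<N. ternary_weight k * c k) = (\<Sum>k<M. ternary_weight k * c k)"
    by (rule sum.mono_neutral_left) (auto simp: M_def vanish)
  then have "(\<Sum>k<N. ternary_weight k * c k) - (\<Sum>k<K. ternary_weight k * c k)
      = (\<Sum>k\<in>{K..<M}. ternary_weight k * c k)"
    using sum_diff_nat_ivl[of 0 K M] by (simp add: atLeast0LessThan M_def)
  also have "\<bar>\<dots>\<bar> \<le> (\<Sum>k\<in>{K..<M}. ternary_weight k)"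
    using digits ternary_weight_pos
    by (intro order.trans[OF sum_abs] sum_mono) (simp add: abs_mult mult_le_cancel_left1 less_imp_le)
  also have "\<dots> \<le> (1/3) ^ K / 2"
    by (simp add: sum_ternary_weight_ivl M_def)
  finally show "\<bar>(\<Sum>k<N. ternary_weight k * c k) - (\<Sum>k<K. ternary_weight k * c k)\<bar> \<le> (1/3) ^ K / 2" .
qed

lemma ternary_expansion_abs_le: "ternary_expansion c t \<Longrightarrow> \<bar>t\<bar> \<le> 1/2"
  unfolding ternary_expansion_def by (drule spec[of _ 0]) simp

lemma ternary_expansion_scale:
  assumes "ternary_expansion c t" and "\<bar>s\<bar> = 1"
  shows "ternary_expansion (\<lambda>k. s * c k) (s * t)"
  unfolding ternary_expansion_def
proof
  fix K
  have "s * t - (\<Sum>k<K. ternary_weight k * (s * c k)) = s * (t - (\<Sum>k<K. ternary_weight k * c k))"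
    by (simp add: sum_distrib_left right_diff_distrib mult.left_commute)
  then show "\<bar>s * t - (\<Sum>k<K. ternary_weight k * (s * c k))\<bar> \<le> (1/3) ^ K / 2"
    using assms unfolding ternary_expansion_def by (simp add: abs_mult)
qed

lemma ternary_expansion_digit_gap:
  assumes t: "ternary_expansion c t" and digits: "\<And>j. \<bar>c j\<bar> \<le> 1"
  shows "ternary_weight k * (1 - c k) \<le> 1/2 - t"
proof -
  have "\<bar>t - (\<Sum>j<Suc k. ternary_weight j * c j)\<bar> \<le> (1/3) ^ Suc k / 2"
    using t unfolding ternary_expansion_def by blast
  then have "t \<le> (\<Sum>j<Suc k. ternary_weight j * c j) + (1/3) ^ Suc k / 2"
    by linarith
  moreover have "(\<Sum>j<k. ternary_weight j * c j) \<le> (\<Sum>j<k. ternary_weight j)"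
    using digits ternary_weight_pos
    by (intro sum_mono) (simp add: abs_le_iff mult_le_cancel_left1 less_imp_le)
  moreover have "(1/3::real) ^ k = 3 * ternary_weight k" "(1/3::real) ^ Suc k = ternary_weight k"
    by (simp_all add: ternary_weight_def)
  ultimately show ?thesis
    by (simp add: sum_ternary_weight algebra_simps)
qed

lemma ternary_expansion_half_digit:
  assumes "ternary_expansion c (1/2)" and "\<And>j. \<bar>c j\<bar> \<le> 1"
  shows "c k = 1"
  using ternary_expansion_digit_gap[OF assms, of k] ternary_weight_pos[of k] assms(2)[of k]
  by (simp add: mult_le_0_iff abs_le_iff)

lemma ternary_expansion_tendsto_half_digit:
  assumes t: "\<And>j. ternary_expansion (c j) (t j)" and digits: "\<And>j k. \<bar>c j k\<bar> \<le> 1"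
    and lim: "t \<longlonglongrightarrow> 1/2"
  shows "(\<lambda>j. c j k) \<longlonglongrightarrow> 1"
proof -
  have "(\<lambda>j. 1/2 - t j) \<longlonglongrightarrow> 0"
    using tendsto_diff[OF tendsto_const[of "1/2"] lim] by simp
  then have gap_lim: "(\<lambda>j. (1/2 - t j) / ternary_weight k) \<longlonglongrightarrow> 0"
    by (rule tendsto_divide_zero)
  have "(\<lambda>j. 1 - c j k) \<longlonglongrightarrow> 0"
  proof (rule real_tendsto_sandwich[OF _ _ tendsto_const gap_lim])
    show "\<forall>\<^sub>F j in sequentially. 0 \<le> 1 - c j k"
      using digits by (simp add: abs_le_iff)
    show "\<forall>\<^sub>F j in sequentially. 1 - c j k \<le> (1/2 - t j) / ternary_weight k"
      using ternary_expansion_digit_gap[OF t digits] ternary_weight_pos[of k]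
      by (simp add: pos_le_divide_eq mult.commute)
  qed
  then have "(\<lambda>j. 1 - (1 - c j k)) \<longlonglongrightarrow> 1 - 0"
    by (intro tendsto_intros)
  then show ?thesis by simp
qed

lemma ternary_expansion_tendsto:
  assumes t: "\<And>j. ternary_expansion (c j) (t j)" and "t \<longlonglongrightarrow> l"
    and "\<And>k. (\<lambda>j. c j k) \<longlonglongrightarrow> d k"
  shows "ternary_expansion d l"
  unfolding ternary_expansion_def
proof
  fix K
  have "(\<lambda>j. \<bar>t j - (\<Sum>k<K. ternary_weight k * c j k)\<bar>) \<longlonglongrightarrow> \<bar>l - (\<Sum>k<K. ternary_weight k * d k)\<bar>"
    using assms by (intro tendsto_intros)
  then show "\<bar>l - (\<Sum>k<K. ternary_weight k * d k)\<bar> \<le> (1/3) ^ K / 2"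
    by (rule LIMSEQ_le_const2) (use t in \<open>auto simp: ternary_expansion_def\<close>)
qed

definition bit_sign :: "(nat \<Rightarrow> bool) \<Rightarrow> nat \<Rightarrow> real" where
  "bit_sign b k = (if b k then 1 else -1)"

lemma abs_bit_sign [simp]: "\<bar>bit_sign b k\<bar> = 1"
  by (simp add: bit_sign_def)

lemma ternary_expansion_bit_sign_unique:
  assumes b: "ternary_expansion (bit_sign b) t" and b': "ternary_expansion (bit_sign b') t"
  shows "b = b'"
proof
  fix k
  show "b k = b' k"
  proof (induction k rule: less_induct)
    case (less k)
    have "(\<Sum>j<k. ternary_weight j * bit_sign b j) = (\<Sum>j<k. ternary_weight j * bit_sign b' j)"
      using less.IH by (intro sum.cong) (auto simp: bit_sign_def)
    moreover have "\<bar>(\<Sum>j<Suc k. ternary_weight j * bit_sign b j) - (\<Sum>j<Suc k. ternary_weight j * bit_sign b' j)\<bar>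
        \<le> ternary_weight k"
    proof -
      have "\<bar>t - (\<Sum>j<Suc k. ternary_weight j * bit_sign b j)\<bar> \<le> ternary_weight k / 2"
        "\<bar>t - (\<Sum>j<Suc k. ternary_weight j * bit_sign b' j)\<bar> \<le> ternary_weight k / 2"
        using b b' unfolding ternary_expansion_def ternary_weight_def by blast+
      then show ?thesis by linarith
    qed
    ultimately have "\<bar>ternary_weight k * (bit_sign b k - bit_sign b' k)\<bar> \<le> ternary_weight k"
      by (simp add: right_diff_distrib)
    then show ?case
      using ternary_weight_pos[of k] by (cases "b k"; cases "b' k") (simp_all add: bit_sign_def abs_mult)
  qed
qed

lemma countable_ternary_expansion_bit_sign: "countable {b. ternary_expansion (bit_sign b) t}"
proof (cases "\<exists>b. ternary_expansion (bit_sign b) t")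
  case True
  then obtain b where "ternary_expansion (bit_sign b) t" ..
  then have "{b. ternary_expansion (bit_sign b) t} \<subseteq> {b}"
    using ternary_expansion_bit_sign_unique by blast
  then show ?thesis
    by (rule countable_subset) simp
qed simp

text \<open>Coordinate \<open>m\<close> carries the \<open>m\<close>-th finite bit string, so the columns
  \<open>(sign_pattern k m)\<^sub>k\<close> run through all finite \<open>\<plusminus>1\<close> words padded with zeros.\<close>
definition sign_pattern :: "nat \<Rightarrow> nat \<Rightarrow> real" where
  "sign_pattern k m =
     (let bs = (from_nat m :: bool list) in if k < length bs then (if bs ! k then 1 else -1) else 0)"

definition ternary_point :: "(nat \<Rightarrow> bool) \<Rightarrow> nat \<Rightarrow> real" where
  "ternary_point b m =
     (\<Sum>k<length (from_nat m :: bool list). ternary_weight k * (bit_sign b k * sign_pattern k m))"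

lemma abs_sign_pattern_le: "\<bar>sign_pattern k m\<bar> \<le> 1"
  by (simp add: sign_pattern_def Let_def)

lemma sign_pattern_linf: "sign_pattern k \<in> linf"
  unfolding linf_iff_abs_bounded using abs_sign_pattern_le by blast

lemma ternary_expansion_ternary_point:
  "ternary_expansion (\<lambda>k. bit_sign b k * sign_pattern k m) (ternary_point b m)"
  unfolding ternary_point_def
  by (rule ternary_expansion_finite) (simp_all add: abs_mult abs_sign_pattern_le, simp add: sign_pattern_def)

lemma ternary_point_linf: "ternary_point b \<in> linf"
  unfolding linf_iff_abs_bounded
  using ternary_expansion_abs_le[OF ternary_expansion_ternary_point] by blast

lemma linf_norm_ternary_point: "linf_norm (ternary_point b) = 1/2"
proof (rule antisym)
  show "linf_norm (ternary_point b) \<le> 1/2"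
    by (rule linf_norm_le[OF ternary_expansion_abs_le[OF ternary_expansion_ternary_point]])
  have "(1 - (1/3) ^ K) / 2 \<le> linf_norm (ternary_point b)" for K
  proof -
    define m where "m = to_nat (map b [0..<K])"
    have pattern: "(from_nat m :: bool list) = map b [0..<K]"
      by (simp add: m_def)
    have "ternary_point b m = (\<Sum>k<K. ternary_weight k * (bit_sign b k * sign_pattern k m))"
      unfolding ternary_point_def pattern by simp
    also have "\<dots> = (\<Sum>k<K. ternary_weight k)"
      by (intro sum.cong) (auto simp: sign_pattern_def pattern bit_sign_def)
    finally have "ternary_point b m = (\<Sum>k<K. ternary_weight k)" .
    then show ?thesis
      using abs_le_linf_norm[OF ternary_point_linf, of b m] by (simp add: sum_ternary_weight)
  qed
  moreover have "(\<lambda>K. (1 - (1/3::real) ^ K) / 2) \<longlonglongrightarrow> (1 - 0) / 2"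
    by (intro tendsto_intros LIMSEQ_power_zero) simp_all
  ultimately show "1/2 \<le> linf_norm (ternary_point b)"
    using LIMSEQ_le_const2 by force
qed

lemma sgn_of_abs_eq_half:
  fixes x :: real
  assumes "\<bar>x\<bar> = 1/2"
  shows "sgn x \<in> {1, -1}" and "sgn x * x = 1/2"
  using assms by (cases "x < 0"; simp)+

locale linf_isometry =
  fixes \<phi> :: "(nat \<Rightarrow> real) \<Rightarrow> nat \<Rightarrow> real"
  assumes linf_linear_isometry: "linf_linear_isometry \<phi>"
begin

lemma maps_linf: "x \<in> linf \<Longrightarrow> \<phi> x \<in> linf"
  using linf_linear_isometry unfolding linf_linear_isometry_def by blast

lemma map_lincomb:
  "x \<in> linf \<Longrightarrow> y \<in> linf \<Longrightarrow> \<phi> (\<lambda>n. a * x n + b * y n) = (\<lambda>n. a * \<phi> x n + b * \<phi> y n)"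
  using linf_linear_isometry unfolding linf_linear_isometry_def by blast

lemma linf_norm_map_diff:
  "x \<in> linf \<Longrightarrow> y \<in> linf \<Longrightarrow> linf_norm (\<lambda>n. \<phi> x n - \<phi> y n) = linf_norm (\<lambda>n. x n - y n)"
  using linf_linear_isometry unfolding linf_linear_isometry_def by blast

lemma map_zero: "\<phi> (\<lambda>n. 0) = (\<lambda>n. 0)"
  using map_lincomb[OF zero_linf zero_linf, of 0 0] by simp

lemma map_sum:
  fixes u :: "nat \<Rightarrow> nat \<Rightarrow> real"
  assumes "\<And>k. u k \<in> linf"
  shows "\<phi> (\<lambda>m. \<Sum>k<K. c k * u k m) = (\<lambda>m. \<Sum>k<K. c k * \<phi> (u k) m)"
proof (induction K)
  case 0
  then show ?case by (simp add: map_zero)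
next
  case (Suc K)
  then show ?case
    using map_lincomb[OF linf_sum[OF assms, where c=c and K=K] assms, where a=1 and b="c K"]
    by simp
qed

lemma linf_norm_map: "x \<in> linf \<Longrightarrow> linf_norm (\<phi> x) = linf_norm x"
  using linf_norm_map_diff[OF _ zero_linf, of x] by (simp add: map_zero)

lemma abs_map_diff_le:
  assumes "x \<in> linf" "y \<in> linf"
  shows "\<bar>\<phi> x m - \<phi> y m\<bar> \<le> linf_norm (\<lambda>n. x n - y n)"
proof -
  have "(\<lambda>n. \<phi> x n - \<phi> y n) \<in> linf"
    using linf_lincomb[OF maps_linf maps_linf, OF assms, of 1 "-1"] by simp
  from abs_le_linf_norm[OF this, of m] show ?thesis
    using linf_norm_map_diff[OF assms] by simp
qed

lemma ternary_expansion_map: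
  fixes u :: "nat \<Rightarrow> nat \<Rightarrow> real"
  assumes x: "x \<in> linf" and u: "\<And>k. u k \<in> linf"
    and expansion: "\<And>m. ternary_expansion (\<lambda>k. a k * u k m) (x m)"
  shows "ternary_expansion (\<lambda>k. a k * \<phi> (u k) m) (\<phi> x m)"
  unfolding ternary_expansion_def
proof
  fix K
  define p where "p = (\<lambda>m. \<Sum>k<K. (ternary_weight k * a k) * u k m)"
  have p: "p \<in> linf"
    unfolding p_def by (rule linf_sum[OF u])
  have "\<phi> p m = (\<Sum>k<K. ternary_weight k * (a k * \<phi> (u k) m))"
    unfolding p_def map_sum[OF u] by (simp add: mult.assoc)
  moreover have "\<bar>\<phi> x m - \<phi> p m\<bar> \<le> linf_norm (\<lambda>n. x n - p n)"
    by (rule abs_map_diff_le[OF x p])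
  moreover have "linf_norm (\<lambda>n. x n - p n) \<le> (1/3) ^ K / 2"
    using expansion unfolding ternary_expansion_def p_def by (intro linf_norm_le) (simp add: mult.assoc)
  ultimately show "\<bar>\<phi> x m - (\<Sum>k<K. ternary_weight k * (a k * \<phi> (u k) m))\<bar> \<le> (1/3) ^ K / 2"
    by simp
qed

lemma abs_map_sign_pattern_le: "\<bar>\<phi> (sign_pattern k) m\<bar> \<le> 1"
  using abs_le_linf_norm[OF maps_linf[OF sign_pattern_linf], of k m]
    linf_norm_map[OF sign_pattern_linf, of k] linf_norm_le[of "sign_pattern k" 1, OF abs_sign_pattern_le]
  by simp

lemma ternary_expansion_map_ternary_point:
  "ternary_expansion (\<lambda>k. bit_sign b k * \<phi> (sign_pattern k) m) (\<phi> (ternary_point b) m)"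
  by (rule ternary_expansion_map[OF ternary_point_linf sign_pattern_linf ternary_expansion_ternary_point])

lemma linf_norm_map_ternary_point: "linf_norm (\<phi> (ternary_point b)) = 1/2"
  using linf_norm_map[OF ternary_point_linf] linf_norm_ternary_point by simp

lemma bits_of_norming_coordinate:
  assumes "\<bar>\<phi> (ternary_point b) n\<bar> = 1/2"
  shows "\<exists>s\<in>{1, -1}. b = (\<lambda>k. 0 < s * \<phi> (sign_pattern k) n)"
proof -
  define s where "s = sgn (\<phi> (ternary_point b) n)"
  have s: "s \<in> {1, -1}" "s * \<phi> (ternary_point b) n = 1/2"
    using sgn_of_abs_eq_half[OF assms] by (simp_all add: s_def)
  have "ternary_expansion (\<lambda>k. s * (bit_sign b k * \<phi> (sign_pattern k) n)) (s * \<phi> (ternary_point b) n)"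
    by (rule ternary_expansion_scale[OF ternary_expansion_map_ternary_point]) (use s(1) in auto)
  then have "ternary_expansion (\<lambda>k. s * (bit_sign b k * \<phi> (sign_pattern k) n)) (1/2)"
    using s(2) by simp
  moreover have "\<bar>s * (bit_sign b k * \<phi> (sign_pattern k) n)\<bar> \<le> 1" for k
    using s(1) abs_map_sign_pattern_le by (auto simp: abs_mult)
  ultimately have digit: "s * (bit_sign b k * \<phi> (sign_pattern k) n) = 1" for k
    by (rule ternary_expansion_half_digit)
  have "b k = (0 < s * \<phi> (sign_pattern k) n)" for k
    using digit[of k] by (cases "b k") (auto simp: bit_sign_def)
  with s(1) show ?thesis by blast
qed

text \<open>The accumulation point is taken in the sequence \<open>\<phi> (ternary_point (\<lambda>_. True))\<close>, which does
  not depend on \<open>b\<close> but has the same digits \<open>\<phi> (sign_pattern k)\<close> up to signs.\<close>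
lemma bits_of_norming_acc_point:
  assumes l0: "l0 \<in> acc_points (\<phi> (ternary_point b))" "\<bar>l0\<bar> = 1/2"
  shows "\<exists>l\<in>acc_points (\<phi> (ternary_point (\<lambda>_. True))). \<exists>s\<in>{1, -1}. ternary_expansion (bit_sign b) (s * l)"
proof -
  let ?v = "\<lambda>k. \<phi> (sign_pattern k)" and ?z = "\<phi> (ternary_point (\<lambda>_. True))"
  obtain r where r: "strict_mono r" "(\<phi> (ternary_point b) \<circ> r) \<longlonglongrightarrow> l0"
    using l0(1) unfolding acc_points_def by blast
  define s where "s = sgn l0"
  have s: "s \<in> {1, -1}" "s * l0 = 1/2"
    using sgn_of_abs_eq_half[OF l0(2)] by (simp_all add: s_def)
  have extremal: "(\<lambda>j. s * (bit_sign b k * ?v k (r j))) \<longlonglongrightarrow> 1" for k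
  proof (rule ternary_expansion_tendsto_half_digit)
    show "ternary_expansion (\<lambda>k. s * (bit_sign b k * ?v k (r j))) (s * \<phi> (ternary_point b) (r j))" for j
      by (rule ternary_expansion_scale[OF ternary_expansion_map_ternary_point]) (use s(1) in auto)
    show "\<bar>s * (bit_sign b k * ?v k (r j))\<bar> \<le> 1" for j k
      using s(1) abs_map_sign_pattern_le by (auto simp: abs_mult)
    show "(\<lambda>j. s * \<phi> (ternary_point b) (r j)) \<longlonglongrightarrow> 1/2"
      using tendsto_mult[OF tendsto_const[of s] r(2)] s(2) by (simp add: o_def)
  qed
  have cancel: "(s * bit_sign b k) * (s * (bit_sign b k * x)) = x" for k x
    using s(1) by (cases "b k") (auto simp: bit_sign_def)
  have digits: "(\<lambda>j. ?v k (r j)) \<longlonglongrightarrow> s * bit_sign b k" for k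
    using tendsto_mult[OF tendsto_const extremal[of k], of "s * bit_sign b k"]
    by (simp only: cancel mult_1_right)
  obtain r' l where r': "strict_mono r'" "(?z \<circ> (r \<circ> r')) \<longlonglongrightarrow> l" and l: "l \<in> acc_points ?z"
    using linf_subseq_acc_point[OF maps_linf[OF ternary_point_linf] r(1)] .
  have "ternary_expansion (\<lambda>k. s * bit_sign b k) l"
  proof (rule ternary_expansion_tendsto)
    show "ternary_expansion (\<lambda>k. ?v k (r (r' j))) (?z (r (r' j)))" for j
      using ternary_expansion_map_ternary_point[of "\<lambda>_. True"] by (simp add: bit_sign_def)
    show "(\<lambda>j. ?z (r (r' j))) \<longlonglongrightarrow> l"
      using r'(2) by (simp add: o_def)
    show "(\<lambda>j. ?v k (r (r' j))) \<longlonglongrightarrow> s * bit_sign b k" for k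
      using LIMSEQ_subseq_LIMSEQ[OF digits r'(1)] by (simp add: o_def)
  qed
  from ternary_expansion_scale[OF this, of s]
  have "ternary_expansion (\<lambda>k. s * (s * bit_sign b k)) (s * l)"
    using s(1) by auto
  moreover have "s * (s * bit_sign b k) = bit_sign b k" for k
    using s(1) by auto
  ultimately have "ternary_expansion (bit_sign b) (s * l)"
    by simp
  with l s(1) show ?thesis by blast
qed

lemma countable_bit_sequences_if_countable_acc_points:
  assumes "countable (acc_points (\<phi> (ternary_point (\<lambda>_. True))))"
  shows "countable (UNIV :: (nat \<Rightarrow> bool) set)"
proof -
  let ?C = "(\<lambda>(n, s). \<lambda>k. 0 < s * \<phi> (sign_pattern k) n) ` (UNIV \<times> {1, -1})
      \<union> (\<Union>l\<in>acc_points (\<phi> (ternary_point (\<lambda>_. True))). \<Union>s\<in>{1, -1}.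
            {b. ternary_expansion (bit_sign b) (s * l)})"
  have "UNIV \<subseteq> ?C"
  proof
    fix b :: "nat \<Rightarrow> bool"
    from linf_norm_attained_or_acc_point[OF maps_linf[OF ternary_point_linf, of b]]
    consider l0 where "l0 \<in> acc_points (\<phi> (ternary_point b))" "\<bar>l0\<bar> = 1/2"
      | n where "\<bar>\<phi> (ternary_point b) n\<bar> = 1/2"
      unfolding linf_norm_map_ternary_point by blast
    then show "b \<in> ?C"
    proof cases
      case 1
      then show ?thesis using bits_of_norming_acc_point by blast
    next
      case 2
      then show ?thesis using bits_of_norming_coordinate by fast
    qed
  qed
  moreover have "countable ?C"
    using assms countable_ternary_expansion_bit_sign by (intro countable_Un countable_image countable_UN) auto
  ultimately show ?thesis
    by (rule countable_subset)
qed

end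

theorem proposition3p1:
  shows "\<not> (\<exists>\<phi>. linf_linear_isometry \<phi> \<and> \<phi> ` linf \<subseteq> L_countable \<union> {(\<lambda>n. 0)})"
proof
  assume "\<exists>\<phi>. linf_linear_isometry \<phi> \<and> \<phi> ` linf \<subseteq> L_countable \<union> {(\<lambda>n. 0)}"
  then obtain \<phi> where isometry: "linf_linear_isometry \<phi>"
    and image: "\<phi> ` linf \<subseteq> L_countable \<union> {(\<lambda>n. 0)}"
    by blast
  interpret linf_isometry \<phi>
    by (rule linf_isometry.intro) (rule isometry)
  let ?z = "\<phi> (ternary_point (\<lambda>_. True))"
  have "?z \<noteq> (\<lambda>n. 0)"
  proof
    assume "?z = (\<lambda>n. 0)"
    then show False
      using linf_norm_map_ternary_point[of "\<lambda>_. True"] linf_norm_zero by simp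
  qed
  then have "?z \<in> L_countable"
    using image ternary_point_linf by blast
  then have "countable (acc_points ?z)"
    by (simp add: L_countable_def)
  then show False
    using countable_bit_sequences_if_countable_acc_points uncountable_bit_sequences by blast
qed

end
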